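(* Let $X$ be a finite cycle set and let $G(X)$ be its permutation group. Then the action of $G(X)$ on $X$ is not a Frobenius action; that is, $G(X)$ does not act on $X$ as a Frobenius group.
   Context: A cycle set is a set $X$ with a binary operation $\cdot$ such that for every $x\in X$ the map $\sigma(x)\colon X\to X$, $y\mapsto x\cdot y$, is bijective, and $(x\cdot y)\cdot(x\cdot z)=(y\cdot x)\cdot(y\cdot z)$ for all $x,y,z\in X$. The permutation group $G(X)$ is the subgroup of the symmetric group on $X$ generated by all $\sigma(x)$, $x\in X$. A group $G$ acting on a finite set $X$ acts as a Frobenius group if the action is transitive, every element $g\ne 1$ of $G$ fixes at most one point of $X$, and some element $g\neq 1$ fixes a point of $X$. *)

theory Defs
  imports Main "HOL-Library.FuncSet"
begin

definition cycle_set :: "'a set \<Rightarrow> ('a \<Rightarrow> 'a \<Rightarrow> 'a) \<Rightarrow> bool" where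
  "cycle_set X op \<longleftrightarrow>
     (\<forall>x\<in>X. \<forall>y\<in>X. op x y \<in> X) \<and>
     (\<forall>x\<in>X. bij_betw (op x) X X) \<and>
     (\<forall>x\<in>X. \<forall>y\<in>X. \<forall>z\<in>X. op (op x y) (op x z) = op (op y x) (op y z))"

text \<open>The permutation sigma(x) of X, extended by the identity outside X
  (so that permutations of X are represented as functions fixing everything outside X).\<close>
definition sigma :: "'a set \<Rightarrow> ('a \<Rightarrow> 'a \<Rightarrow> 'a) \<Rightarrow> 'a \<Rightarrow> 'a \<Rightarrow> 'a" where
  "sigma X op x = (\<lambda>y. if y \<in> X then op x y else y)"

inductive_set gen_perm_group :: "'a set \<Rightarrow> ('a \<Rightarrow> 'a) set \<Rightarrow> ('a \<Rightarrow> 'a) set"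
  for X :: "'a set" and S :: "('a \<Rightarrow> 'a) set" where
  gen_id: "id \<in> gen_perm_group X S"
| gen_gen: "s \<in> S \<Longrightarrow> s \<in> gen_perm_group X S"
| gen_comp: "g \<in> gen_perm_group X S \<Longrightarrow> h \<in> gen_perm_group X S \<Longrightarrow> g \<circ> h \<in> gen_perm_group X S"
| gen_inv: "g \<in> gen_perm_group X S \<Longrightarrow> inv g \<in> gen_perm_group X S"

definition perm_group_cs :: "'a set \<Rightarrow> ('a \<Rightarrow> 'a \<Rightarrow> 'a) \<Rightarrow> ('a \<Rightarrow> 'a) set" where
  "perm_group_cs X op = gen_perm_group X (sigma X op ` X)"

definition frobenius_action :: "('a \<Rightarrow> 'a) set \<Rightarrow> 'a set \<Rightarrow> bool" where
  "frobenius_action G X \<longleftrightarrow>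
     (\<forall>x\<in>X. \<forall>y\<in>X. \<exists>g\<in>G. g x = y) \<and>
     (\<forall>g\<in>G. g \<noteq> id \<longrightarrow> card {x\<in>X. g x = x} \<le> 1) \<and>
     (\<exists>g\<in>G. g \<noteq> id \<and> (\<exists>x\<in>X. g x = x))"

end

theory Submission
  imports Defs "HOL-Library.Multiset" "HOL-Combinatorics.Permutations"
    "HOL-Algebra.Sylow" "HOL-Algebra.Multiplicative_Group"
begin

text \<open>The permutation group \<open>G = G(X)\<close> of a finite cycle set is a left brace: it carries an
  abelian group operation \<open>+\<close> with \<open>g + k = \<lambda>\<^sub>g(k) \<circ> g\<close>, where each \<open>\<lambda>\<^sub>g\<close> is an
  automorphism of \<open>(G, +)\<close> and \<open>\<lambda>\<^sub>g(\<sigma>\<^sub>x) = \<sigma>\<^sub>g\<^sub>x\<close>.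

  Suppose \<open>G\<close> acts on \<open>X\<close> as a Frobenius group, let \<open>n = |X|\<close> and let \<open>h\<close> be the order of a
  point stabilizer. Then \<open>h\<close> divides \<open>n - 1\<close>, so \<open>|G| = n h\<close> with \<open>n\<close> and \<open>h\<close> coprime, and
  \<open>(G, +)\<close> is the direct sum of its \<open>n\<close>-torsion \<open>P\<close> and its \<open>h\<close>-torsion \<open>Q\<close>, both invariant
  under all \<open>\<lambda>\<^sub>g\<close>. An averaging argument produces \<open>w\<close> conjugating the stabilizer of \<open>a\<close>
  into \<open>Q\<close>, and counting shows that \<open>Q\<close> is the stabilizer of \<open>b = w a\<close>. The \<open>P\<close>-component
  \<open>k\<close> of \<open>\<sigma>\<^sub>b\<close> is fixed by \<open>\<lambda>\<^sub>u\<close> for every \<open>u\<close> fixing \<open>b\<close>; comparing \<open>u + k\<close> with \<open>k + u\<close> for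
  some \<open>u \<noteq> 1\<close> fixing \<open>b\<close> shows that \<open>k\<close> fixes \<open>b\<close>, so \<open>k \<in> P \<inter> Q = 0\<close> and \<open>\<sigma>\<^sub>b \<in> Q\<close>.
  Then every \<open>\<sigma>\<^sub>x = \<lambda>\<^sub>g(\<sigma>\<^sub>b)\<close> lies in \<open>Q\<close>, so all of \<open>G\<close> fixes \<open>b\<close>, and transitivity forces
  \<open>X = {b}\<close>, leaving no nontrivial element of \<open>G\<close>.\<close>

section \<open>Finite abelian groups of coprime order\<close>

lemma (in group) coprime_order_if_pow_eq_one:
  assumes fin: "finite (carrier G)"
    and pow_one: "\<And>x. x \<in> carrier G \<Longrightarrow> x [^] m = \<one>"
    and "coprime m r"
  shows "coprime (order G) r"
proof (rule ccontr)
  assume "\<not> coprime (order G) r"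
  then have "gcd (order G) r \<noteq> 1" by (simp add: coprime_iff_gcd_eq_1)
  then obtain p where p: "prime p" "p dvd gcd (order G) r" using prime_factor_nat by blast
  then have "p dvd order G" "p dvd r" by simp_all
  have "\<not> p dvd m"
  proof
    assume "p dvd m"
    with \<open>p dvd r\<close> have "p dvd gcd m r" by simp
    with \<open>coprime m r\<close> p(1) show False by (simp add: coprime_iff_gcd_eq_1)
  qed
  with p(1) have "gcd p m = 1" by (simp add: prime_imp_coprime coprime_iff_gcd_eq_1[symmetric])
  obtain k where "order G = p ^ 1 * k" using \<open>p dvd order G\<close> by auto
  from sylow_thm[OF p(1) is_group this fin]
  obtain H where H: "subgroup H G" "card H = p" by auto
  then have "\<not> H \<subseteq> {\<one>}"
    using card_mono[of "{\<one>}" H] p(1) prime_ge_2_nat[of p] by auto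
  then obtain x where x: "x \<in> H" "x \<noteq> \<one>" by blast
  have x_carrier: "x \<in> carrier G" using H(1) x(1) by (rule subgroup.mem_carrier)
  interpret H: group "G\<lparr>carrier := H\<rparr>" using H(1) by (rule subgroup_imp_group)
  have "x [^]\<^bsub>G\<lparr>carrier := H\<rparr>\<^esub> order (G\<lparr>carrier := H\<rparr>) = \<one>\<^bsub>G\<lparr>carrier := H\<rparr>\<^esub>"
    using x(1) by (intro H.pow_order_eq_1) simp
  then have "x [^]\<^bsub>G\<lparr>carrier := H\<rparr>\<^esub> p = \<one>"
    using H(2) by (simp add: order_def)
  then have "ord x dvd p"
    using nat_pow_consistent[of x p H] pow_eq_id[OF x_carrier] by simp
  moreover have "ord x dvd m" using pow_one[OF x_carrier] pow_eq_id[OF x_carrier] by simp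
  ultimately have "ord x dvd gcd p m" by simp
  then have "ord x = 1" using \<open>gcd p m = 1\<close> by simp
  then have "x [^] (1::nat) = \<one>" using pow_eq_id[OF x_carrier, of 1] by simp
  with x(2) x_carrier show False by simp
qed

definition torsion :: "('a, 'b) monoid_scheme \<Rightarrow> nat \<Rightarrow> 'a set" where
  "torsion G m = {x \<in> carrier G. x [^]\<^bsub>G\<^esub> m = \<one>\<^bsub>G\<^esub>}"

lemma (in comm_group) subgroup_torsion: "subgroup (torsion G m) G"
proof (rule subgroupI)
  show "inv x \<in> torsion G m" if "x \<in> torsion G m" for x
    using that by (simp add: torsion_def nat_pow_inv)
  show "x \<otimes> y \<in> torsion G m" if "x \<in> torsion G m" "y \<in> torsion G m" for x y
    using that by (simp add: torsion_def pow_mult_distrib m_comm)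
qed (auto simp: torsion_def)

lemma (in comm_group) card_torsion_dvd:
  assumes fin: "finite (carrier G)" and "order G = n * h" and "coprime n h"
  shows "card (torsion G h) dvd h"
proof -
  interpret T: group "G\<lparr>carrier := torsion G h\<rparr>"
    by (rule subgroup_imp_group[OF subgroup_torsion])
  have "coprime (order (G\<lparr>carrier := torsion G h\<rparr>)) n"
  proof (rule T.coprime_order_if_pow_eq_one)
    show "finite (carrier (G\<lparr>carrier := torsion G h\<rparr>))"
      using fin by (simp add: torsion_def)
    show "x [^]\<^bsub>G\<lparr>carrier := torsion G h\<rparr>\<^esub> h = \<one>\<^bsub>G\<lparr>carrier := torsion G h\<rparr>\<^esub>"
      if "x \<in> carrier (G\<lparr>carrier := torsion G h\<rparr>)" for x
      using that by (simp add: torsion_def nat_pow_consistent[symmetric])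
    show "coprime h n" using \<open>coprime n h\<close> by (simp add: coprime_commute)
  qed
  then have "coprime (card (torsion G h)) n" by (simp add: order_def)
  moreover have "card (torsion G h) dvd n * h"
    using lagrange[OF subgroup_torsion] \<open>order G = n * h\<close> by (metis dvd_triv_right)
  ultimately show ?thesis by (simp add: coprime_dvd_mult_right_iff)
qed

lemma (in group_hom) hom_torsion: "x \<in> torsion G m \<Longrightarrow> h x \<in> torsion H m"
  by (simp add: torsion_def hom_nat_pow[symmetric])

lemma hom_finprod_comm_group:
  assumes "comm_group G" "comm_group H" "f \<in> hom G H" "g \<in> A \<rightarrow> carrier G"
  shows "f (finprod G g A) = finprod H (f \<circ> g) A"
proof -
  interpret G: comm_group G by fact
  interpret H: comm_group H by fact
  interpret group_hom G H f by (simp add: assms group_hom_axioms_def group_hom_def)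
  show ?thesis
  proof (cases "finite A")
    case True
    then show ?thesis using assms(4)
    proof (induction A rule: finite_induct)
      case (insert y A)
      then have "(\<lambda>a. f (g a)) \<in> A \<rightarrow> carrier H" by (auto intro: hom_closed)
      with insert show ?case by (simp add: G.finprod_insert H.finprod_insert Pi_iff G.finprod_closed)
    qed simp
  qed (simp add: finprod_def)
qed

text \<open>Since \<open>h * c \<equiv> 1 (mod n)\<close> and \<open>n * h\<close> annihilates the group, \<open>x \<mapsto> x [^] (h * c)\<close>
  is the projection onto the \<open>n\<close>-torsion along the \<open>h\<close>-torsion.\<close>

locale coprime_order_comm_group = comm_group +
  fixes n h c d :: nat
  assumes finite_carrier: "finite (carrier G)"
    and order_eq: "order G = n * h"
    and bezout: "h * c = n * d + 1"
begin

definition n_part :: "'a \<Rightarrow> 'a" where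
  "n_part x = x [^] (h * c)"

definition h_part :: "'a \<Rightarrow> 'a" where
  "h_part x = x \<otimes> inv (n_part x)"

lemma pow_mult_order: "x \<in> carrier G \<Longrightarrow> x [^] (n * h * k) = \<one>"
  using pow_order_eq_1[of x] order_eq by (simp add: nat_pow_pow[symmetric])

lemma n_part_closed: "x \<in> carrier G \<Longrightarrow> n_part x \<in> carrier G"
  by (simp add: n_part_def)

lemma h_part_closed: "x \<in> carrier G \<Longrightarrow> h_part x \<in> carrier G"
  by (simp add: h_part_def n_part_def)

lemma n_part_torsion: "x \<in> carrier G \<Longrightarrow> n_part x \<in> torsion G n"
  using pow_mult_order[of x c]
  by (simp add: torsion_def n_part_def nat_pow_pow mult.commute mult.left_commute)

lemma n_part_idem: "x \<in> torsion G n \<Longrightarrow> n_part x = x"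
  using bezout by (simp add: torsion_def n_part_def nat_pow_mult[symmetric] nat_pow_pow[symmetric])

lemma h_part_torsion: "x \<in> carrier G \<Longrightarrow> h_part x \<in> torsion G h"
proof -
  assume x: "x \<in> carrier G"
  have "x [^] (h * c * h) = x [^] (n * h * d) \<otimes> x [^] h"
    using x bezout by (simp add: nat_pow_mult algebra_simps)
  then have "n_part x [^] h = x [^] h"
    using x pow_mult_order by (simp add: n_part_def nat_pow_pow)
  then show ?thesis
    using x by (simp add: torsion_def h_part_def n_part_closed pow_mult_distrib m_comm nat_pow_inv)
qed

lemma h_part_mult_n_part: "x \<in> carrier G \<Longrightarrow> h_part x \<otimes> n_part x = x"
  by (simp add: h_part_def n_part_closed m_assoc)

lemma torsion_inter: "x \<in> torsion G n \<Longrightarrow> x \<in> torsion G h \<Longrightarrow> x = \<one>"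
  using n_part_idem[of x] by (simp add: torsion_def n_part_def nat_pow_pow[symmetric])

lemma card_torsion_le: "card (torsion G h) \<le> h"
proof -
  have "coprime n h"
    using bezout by (metis coprime_add_one_left coprime_mult_left_iff mult.commute coprime_commute)
  moreover have "h > 0" using bezout by (cases h) auto
  ultimately show ?thesis
    using card_torsion_dvd[OF finite_carrier order_eq] by (simp add: dvd_imp_le)
qed

lemma n_part_mult:
  "x \<in> carrier G \<Longrightarrow> y \<in> carrier G \<Longrightarrow> n_part (x \<otimes> y) = n_part x \<otimes> n_part y"
  by (simp add: n_part_def pow_mult_distrib m_comm)

lemma hom_n_part: "f \<in> hom G G \<Longrightarrow> x \<in> carrier G \<Longrightarrow> f (n_part x) = n_part (f x)"
  by (simp add: n_part_def hom_nat_pow is_group)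

end

section \<open>Permutation groups\<close>

text \<open>From here on \<open>inv\<close> is the inverse function of \<open>Hilbert_Choice\<close>, as in the definition
  of \<open>gen_perm_group\<close>, not the group inverse of HOL-Algebra.\<close>

unbundle no m_inv_syntax

locale permutation_group =
  fixes H :: "('a \<Rightarrow> 'a) set" and Y :: "'a set"
  assumes finite_Y: "finite Y"
    and id_mem: "id \<in> H"
    and comp_mem: "g \<in> H \<Longrightarrow> k \<in> H \<Longrightarrow> g \<circ> k \<in> H"
    and inv_mem: "g \<in> H \<Longrightarrow> inv g \<in> H"
    and mem_permutes: "g \<in> H \<Longrightarrow> g permutes Y"
begin

lemma finite_H: "finite H"
  by (rule finite_subset[OF _ finite_permutations[OF finite_Y]]) (auto intro: mem_permutes)

lemma inv_apply: "g \<in> H \<Longrightarrow> inv g (g x) = x"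
  using mem_permutes permutes_inverses(2) by fast

lemma apply_inv: "g \<in> H \<Longrightarrow> g (inv g x) = x"
  using mem_permutes permutes_inverses(1) by fast

lemma mem_image: "g \<in> H \<Longrightarrow> x \<in> Y \<Longrightarrow> g x \<in> Y"
  using mem_permutes[of g] by (simp add: permutes_in_image)

lemma inj_mem:
  assumes "g \<in> H" "g x = g y"
  shows "x = y"
proof -
  have "inv g (g x) = inv g (g y)" using assms(2) by (rule arg_cong)
  then show ?thesis using inv_apply[OF assms(1)] by simp
qed

lemma inv_closed_if_comp_closed:
  assumes "S \<subseteq> H" "id \<in> S" "\<And>f g. f \<in> S \<Longrightarrow> g \<in> S \<Longrightarrow> f \<circ> g \<in> S" "f \<in> S"
  shows "inv f \<in> S"
proof -
  have "f \<in> H" using assms(1,4) by blast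
  have "finite S" using assms(1) finite_H by (rule finite_subset)
  moreover have "(\<circ>) f ` S \<subseteq> S" by (rule image_subsetI) (rule assms(3)[OF assms(4)])
  moreover have "inj_on ((\<circ>) f) S"
  proof (rule inj_onI)
    fix g k assume "f \<circ> g = f \<circ> k"
    then have "f (g x) = f (k x)" for x by (simp add: fun_eq_iff)
    then show "g = k" using inj_mem[OF \<open>f \<in> H\<close>] by (intro ext) blast
  qed
  ultimately have "(\<circ>) f ` S = S" by (rule endo_inj_surj)
  then obtain g where "g \<in> S" "f \<circ> g = id" using assms(2) by (metis imageE)
  have "inv f = (inv f \<circ> f) \<circ> g" using \<open>f \<circ> g = id\<close> by (simp add: comp_assoc)
  also have "\<dots> = g" using \<open>f \<in> H\<close> by (simp add: fun_eq_iff inv_apply)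
  finally show ?thesis using \<open>g \<in> S\<close> by simp
qed

lemma comp_right_cancel:
  assumes "h \<in> H" "f \<circ> h = f' \<circ> h"
  shows "f = f'"
proof
  fix x
  show "f x = f' x" using fun_cong[OF assms(2), of "inv h x"] apply_inv[OF assms(1)] by simp
qed

definition stab :: "'a \<Rightarrow> ('a \<Rightarrow> 'a) set" where
  "stab y = {g \<in> H. g y = y}"

lemma stab_subset: "stab y \<subseteq> H"
  by (auto simp: stab_def)

lemma finite_stab: "finite (stab y)"
  using stab_subset finite_H by (rule finite_subset)

lemma id_stab: "id \<in> stab y"
  by (simp add: stab_def id_mem)

lemma comp_stab: "g \<in> stab y \<Longrightarrow> k \<in> stab y \<Longrightarrow> g \<circ> k \<in> stab y"
  by (simp add: stab_def comp_mem)

lemma inv_stab: "g \<in> stab y \<Longrightarrow> inv g \<in> stab y"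
  by (auto simp: stab_def inv_mem intro: inj_mem[of g] simp: apply_inv)

lemma conj_stab: "g \<in> H \<Longrightarrow> u \<in> stab x \<Longrightarrow> g \<circ> u \<circ> inv g \<in> stab (g x)"
  by (simp add: stab_def comp_mem inv_mem inv_apply)

lemma inj_conj:
  assumes "g \<in> H"
  shows "inj (\<lambda>u. g \<circ> u \<circ> inv g)"
proof (rule injI)
  fix u v assume eq: "g \<circ> u \<circ> inv g = g \<circ> v \<circ> inv g"
  have "g (u x) = g (v x)" for x
    using fun_cong[OF eq, of "g x"] assms by (simp add: inv_apply)
  then show "u = v" using inj_mem[OF assms] by (intro ext) blast
qed

lemma image_comp_right_stab:
  assumes "u \<in> stab x"
  shows "(\<lambda>v. v \<circ> u) ` stab x = stab x"
proof
  show "(\<lambda>v. v \<circ> u) ` stab x \<subseteq> stab x" using assms comp_stab by auto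
  have "u \<in> H" using assms stab_subset by blast
  show "stab x \<subseteq> (\<lambda>v. v \<circ> u) ` stab x"
  proof
    fix v assume "v \<in> stab x"
    then have "v \<circ> inv u \<in> stab x" using assms comp_stab inv_stab by blast
    moreover have "v = (v \<circ> inv u) \<circ> u" using \<open>u \<in> H\<close> by (simp add: fun_eq_iff inv_apply)
    ultimately show "v \<in> (\<lambda>v. v \<circ> u) ` stab x" by blast
  qed
qed

lemma inj_on_comp_right: "u \<in> H \<Longrightarrow> inj_on (\<lambda>v. v \<circ> u) A"
  using comp_right_cancel by (auto intro: inj_onI)

lemma card_eq_card_mult_card_stab:
  assumes transitive: "\<And>x y. x \<in> Y \<Longrightarrow> y \<in> Y \<Longrightarrow> \<exists>g\<in>H. g x = y" and "x \<in> Y"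
  shows "card H = card Y * card (stab x)"
proof -
  define F where "F y = {g \<in> H. g x = y}" for y
  have H_eq: "H = (\<Union>y\<in>Y. F y)" using mem_image \<open>x \<in> Y\<close> by (auto simp: F_def)
  have "card (F y) = card (stab x)" if "y \<in> Y" for y
  proof -
    obtain g where g: "g \<in> H" "g x = y" using transitive[OF \<open>x \<in> Y\<close> \<open>y \<in> Y\<close>] by blast
    have "bij_betw ((\<circ>) g) (stab x) (F y)"
    proof (rule bij_betwI[where g = "(\<circ>) (inv g)"])
      show "(\<circ>) g \<in> stab x \<rightarrow> F y" using g by (auto simp: stab_def F_def comp_mem)
      show "(\<circ>) (inv g) \<in> F y \<rightarrow> stab x"
        using g by (auto simp: stab_def F_def comp_mem inv_mem inv_apply)
    qed (use g in \<open>auto simp: fun_eq_iff inv_apply apply_inv\<close>)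
    then show ?thesis by (rule bij_betw_same_card[symmetric])
  qed
  moreover have "card (\<Union>y\<in>Y. F y) = (\<Sum>y\<in>Y. card (F y))"
    using finite_Y finite_H by (intro card_UN_disjoint) (auto simp: F_def)
  ultimately show ?thesis using H_eq by simp
qed

lemma card_dvd_card_if_free:
  assumes K: "K \<subseteq> H" "id \<in> K" "\<And>g k. g \<in> K \<Longrightarrow> k \<in> K \<Longrightarrow> g \<circ> k \<in> K"
      "\<And>g. g \<in> K \<Longrightarrow> inv g \<in> K"
    and "Z \<subseteq> Y" "\<And>g z. g \<in> K \<Longrightarrow> z \<in> Z \<Longrightarrow> g z \<in> Z"
    and free: "\<And>g z. g \<in> K \<Longrightarrow> z \<in> Z \<Longrightarrow> g z = z \<Longrightarrow> g = id"
  shows "card K dvd card Z"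
  using finite_subset[OF \<open>Z \<subseteq> Y\<close> finite_Y] assms(5-7)
proof (induction Z rule: finite_psubset_induct)
  case (psubset Z)
  show ?case
  proof (cases "Z = {}")
    case False
    then obtain z where "z \<in> Z" by blast
    define orb where "orb = (\<lambda>g. g z) ` K"
    have "inj_on (\<lambda>g. g z) K"
    proof (rule inj_onI)
      fix g k assume gk: "g \<in> K" "k \<in> K" "g z = k z"
      have "inv k \<circ> g \<in> K" using gk K(3,4) by blast
      moreover have "(inv k \<circ> g) z = z" using gk K(1) by (auto simp: inv_apply)
      ultimately have "inv k \<circ> g = id" using psubset.prems(3) \<open>z \<in> Z\<close> by blast
      then have "k \<circ> (inv k \<circ> g) = k" by simp
      then show "g = k" using gk(2) K(1) by (auto simp: fun_eq_iff apply_inv)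
    qed
    then have card_orb: "card orb = card K" by (simp add: orb_def card_image)
    have orb_subset: "orb \<subseteq> Z" using psubset.prems(2) \<open>z \<in> Z\<close> by (auto simp: orb_def)
    have "z \<in> orb" using K(2) unfolding orb_def by (metis id_apply image_eqI)
    have "g y \<notin> orb" if "g \<in> K" "y \<in> Z - orb" for g y
    proof
      assume "g y \<in> orb"
      then obtain k where k: "k \<in> K" "g y = k z" by (auto simp: orb_def)
      then have "y = (inv g \<circ> k) z" using inv_apply[of g y] that(1) K(1) by auto
      moreover have "inv g \<circ> k \<in> K" using that(1) k(1) K(3,4) by blast
      ultimately show False using that(2) unfolding orb_def by (metis Diff_iff image_eqI)
    qed
    then have "card K dvd card (Z - orb)"
      using \<open>z \<in> orb\<close> \<open>z \<in> Z\<close> psubset.prems by (intro psubset.IH) auto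
    moreover have "card Z = card orb + card (Z - orb)"
      using orb_subset psubset.hyps by (simp add: card_Diff_subset card_mono finite_subset)
    ultimately show ?thesis using card_orb by simp
  qed simp
qed

end

section \<open>The brace structure of the permutation group of a cycle set\<close>

locale finite_cycle_set =
  fixes X :: "'a set" and op :: "'a \<Rightarrow> 'a \<Rightarrow> 'a"
  assumes finite_X: "finite X" and cycle_set: "cycle_set X op"
begin

abbreviation G :: "('a \<Rightarrow> 'a) set" where
  "G \<equiv> perm_group_cs X op"

text \<open>\<open>\<sigma> x\<close> is \<open>sigma X op x\<close>, made total by \<open>\<sigma> x = id\<close> for \<open>x \<notin> X\<close>, so that multisets
  over the whole type \<open>'a\<close> can be evaluated below.\<close>

definition \<sigma> :: "'a \<Rightarrow> 'a \<Rightarrow> 'a" where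
  "\<sigma> x = (if x \<in> X then sigma X op x else id)"

lemma sigma_permutes: "x \<in> X \<Longrightarrow> sigma X op x permutes X"
  using cycle_set by (auto simp: cycle_set_def permutes_altdef sigma_def cong: bij_betw_cong)

lemma \<sigma>_cycloid: "\<sigma> (\<sigma> x y) \<circ> \<sigma> x = \<sigma> (\<sigma> y x) \<circ> \<sigma> y"
proof (cases "x \<in> X \<and> y \<in> X")
  case True
  have closed: "op x y \<in> X" "op y x \<in> X" "\<And>z. z \<in> X \<Longrightarrow> op x z \<in> X \<and> op y z \<in> X"
    using True cycle_set by (auto simp: cycle_set_def)
  have "op (op x y) (op x z) = op (op y x) (op y z)" if "z \<in> X" for z
    using True that cycle_set by (simp add: cycle_set_def)
  with True closed show ?thesis by (auto simp: \<sigma>_def sigma_def fun_eq_iff)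
qed (auto simp: \<sigma>_def sigma_def fun_eq_iff)

lemma perm_group_cs_subset:
  assumes "id \<in> K" "\<And>x. x \<in> X \<Longrightarrow> sigma X op x \<in> K"
    and "\<And>g k. g \<in> K \<Longrightarrow> k \<in> K \<Longrightarrow> g \<circ> k \<in> K" and "\<And>g. g \<in> K \<Longrightarrow> inv g \<in> K"
  shows "G \<subseteq> K"
proof
  fix g assume "g \<in> G"
  then show "g \<in> K" unfolding perm_group_cs_def
    by (induction rule: gen_perm_group.induct) (blast intro: assms)+
qed

lemma \<sigma>_mem: "\<sigma> x \<in> G"
  by (simp add: \<sigma>_def perm_group_cs_def gen_perm_group.intros)

sublocale permutation_group G X
proof
  show "id \<in> G" "\<And>g k. g \<in> G \<Longrightarrow> k \<in> G \<Longrightarrow> g \<circ> k \<in> G" "\<And>g. g \<in> G \<Longrightarrow> inv g \<in> G"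
    by (simp_all add: perm_group_cs_def gen_perm_group.intros)
  have "G \<subseteq> {g. g permutes X}"
    by (intro perm_group_cs_subset) (auto simp: sigma_permutes permutes_compose permutes_inv)
  then show "\<And>g. g \<in> G \<Longrightarrow> g permutes X" by blast
qed (fact finite_X)

text \<open>The structure monoid of \<open>X\<close> (free commutative on \<open>X\<close>) maps onto \<open>G(X)\<close> by
  \<open>mset_perm (M + {#z#}) = \<sigma> (mset_perm M z) \<circ> mset_perm M\<close>; the cycle set equation is
  exactly what makes this independent of the order of the elements.\<close>

lemma comp_fun_commute_\<sigma>: "comp_fun_commute (\<lambda>z g. \<sigma> (g z) \<circ> g)"
proof
  fix y x
  show "(\<lambda>g. \<sigma> (g y) \<circ> g) \<circ> (\<lambda>g. \<sigma> (g x) \<circ> g) = (\<lambda>g. \<sigma> (g x) \<circ> g) \<circ> (\<lambda>g. \<sigma> (g y) \<circ> g)"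
    using \<sigma>_cycloid by (simp add: fun_eq_iff comp_assoc[symmetric])
qed

definition mset_perm :: "'a multiset \<Rightarrow> 'a \<Rightarrow> 'a" where
  "mset_perm M = fold_mset (\<lambda>z g. \<sigma> (g z) \<circ> g) id M"

lemma mset_perm_empty [simp]: "mset_perm {#} = id"
  by (simp add: mset_perm_def)

lemma mset_perm_add_mset: "mset_perm (add_mset z M) = \<sigma> (mset_perm M z) \<circ> mset_perm M"
  by (simp add: mset_perm_def comp_fun_commute.fold_mset_add_mset[OF comp_fun_commute_\<sigma>])

lemma mset_perm_single: "mset_perm {#z#} = \<sigma> z"
  by (simp add: mset_perm_add_mset)

lemma mset_perm_union: "mset_perm (M + N) = mset_perm (image_mset (mset_perm M) N) \<circ> mset_perm M"
  by (induction N) (simp_all add: mset_perm_add_mset comp_assoc)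

lemma mset_perm_mem: "mset_perm M \<in> G"
proof (induction M)
  case empty
  show ?case unfolding mset_perm_empty by (rule id_mem)
next
  case (add z M)
  show ?case unfolding mset_perm_add_mset by (rule comp_mem[OF \<sigma>_mem add.IH])
qed

lemma mset_perm_comp: "mset_perm M \<circ> mset_perm N = mset_perm (N + image_mset (inv (mset_perm N)) M)"
proof -
  have "mset_perm N \<circ> inv (mset_perm N) = id"
    using apply_inv[OF mset_perm_mem] by (simp add: fun_eq_iff)
  then show ?thesis by (simp add: mset_perm_union multiset.map_comp)
qed

lemma mset_perm_surj: "g \<in> G \<Longrightarrow> \<exists>M. mset_perm M = g"
proof -
  have comp_closed: "f \<circ> g \<in> range mset_perm" if "f \<in> range mset_perm" "g \<in> range mset_perm" for f g
    using that mset_perm_comp by blast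
  have "sigma X op x \<in> range mset_perm" if "x \<in> X" for x
    using that mset_perm_single[of x] by (metis \<sigma>_def rangeI)
  moreover have "range mset_perm \<subseteq> G" using mset_perm_mem by blast
  moreover have "id \<in> range mset_perm" by (metis mset_perm_empty rangeI)
  ultimately have "G \<subseteq> range mset_perm"
    using comp_closed inv_closed_if_comp_closed by (intro perm_group_cs_subset) auto
  then show "g \<in> G \<Longrightarrow> \<exists>M. mset_perm M = g" by blast
qed

definition mset_rep :: "('a \<Rightarrow> 'a) \<Rightarrow> 'a multiset" where
  "mset_rep g = (SOME M. mset_perm M = g)"

lemma mset_perm_rep: "g \<in> G \<Longrightarrow> mset_perm (mset_rep g) = g"
  unfolding mset_rep_def using mset_perm_surj by (rule someI_ex)

lemma mset_perm_add_cong: "mset_perm M = mset_perm M' \<Longrightarrow> mset_perm (M + N) = mset_perm (M' + N)"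
  by (simp add: mset_perm_union)

lemma mset_perm_image_cong:
  assumes "mset_perm M = mset_perm N" "g \<in> G"
  shows "mset_perm (image_mset g M) = mset_perm (image_mset g N)"
proof -
  obtain K where K: "mset_perm K = g" using mset_perm_surj[OF assms(2)] by blast
  have "mset_perm (image_mset g M) \<circ> g = mset_perm (M + K)"
    by (simp add: mset_perm_union K add.commute)
  also have "\<dots> = mset_perm (N + K)" using assms(1) by (rule mset_perm_add_cong)
  also have "\<dots> = mset_perm (image_mset g N) \<circ> g"
    by (simp add: mset_perm_union K add.commute)
  finally show ?thesis using assms(2) by (rule comp_right_cancel[rotated])
qed

text \<open>Transporting the addition of multisets gives the left brace structure of \<open>G(X)\<close>:
  \<open>bplus g k\<close> is \<open>g + k\<close> and \<open>lam g k\<close> is \<open>\<lambda>\<^sub>g(k)\<close>, with \<open>g + k = \<lambda>\<^sub>g(k) \<circ> g\<close>.\<close>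

definition bplus :: "('a \<Rightarrow> 'a) \<Rightarrow> ('a \<Rightarrow> 'a) \<Rightarrow> 'a \<Rightarrow> 'a" where
  "bplus k l = mset_perm (mset_rep k + mset_rep l)"

definition lam :: "('a \<Rightarrow> 'a) \<Rightarrow> ('a \<Rightarrow> 'a) \<Rightarrow> 'a \<Rightarrow> 'a" where
  "lam g k = mset_perm (image_mset g (mset_rep k))"

lemma bplus_mset_perm: "bplus (mset_perm M) (mset_perm N) = mset_perm (M + N)"
proof -
  have "bplus (mset_perm M) (mset_perm N) = mset_perm (M + mset_rep (mset_perm N))"
    unfolding bplus_def by (rule mset_perm_add_cong[OF mset_perm_rep[OF mset_perm_mem]])
  also have "\<dots> = mset_perm (N + M)"
    by (simp only: add.commute[of M] mset_perm_add_cong[OF mset_perm_rep[OF mset_perm_mem]])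
  finally show ?thesis by (simp add: add.commute)
qed

lemma lam_mset_perm: "g \<in> G \<Longrightarrow> lam g (mset_perm N) = mset_perm (image_mset g N)"
  unfolding lam_def by (rule mset_perm_image_cong[OF mset_perm_rep[OF mset_perm_mem]])

lemma bplus_mem: "bplus k l \<in> G"
  by (simp add: bplus_def mset_perm_mem)

lemma lam_mem: "lam g k \<in> G"
  by (simp add: lam_def mset_perm_mem)

lemma bplus_eq_lam_comp:
  assumes "g \<in> G" "k \<in> G"
  shows "bplus g k = lam g k \<circ> g"
proof -
  obtain M N where "g = mset_perm M" "k = mset_perm N"
    using assms by (metis mset_perm_surj)
  then show ?thesis by (simp add: bplus_mset_perm lam_mset_perm mset_perm_mem mset_perm_union)
qed

lemma bplus_comm: "bplus k l = bplus l k"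
  by (simp add: bplus_def add.commute)

lemma bplus_assoc:
  assumes "k \<in> G" "l \<in> G" "m \<in> G"
  shows "bplus (bplus k l) m = bplus k (bplus l m)"
proof -
  obtain K L M where "k = mset_perm K" "l = mset_perm L" "m = mset_perm M"
    using assms by (metis mset_perm_surj)
  then show ?thesis by (simp add: bplus_mset_perm add.assoc)
qed

lemma id_bplus:
  assumes "k \<in> G"
  shows "bplus id k = k"
proof -
  obtain K where "k = mset_perm K" using assms by (metis mset_perm_surj)
  then show ?thesis using bplus_mset_perm[of "{#}" K] by simp
qed

lemma lam_lam:
  assumes "g \<in> G" "h \<in> G" "k \<in> G"
  shows "lam g (lam h k) = lam (g \<circ> h) k"
proof -
  obtain K where "k = mset_perm K" using assms(3) by (metis mset_perm_surj)
  then show ?thesis using assms(1,2) by (simp add: lam_mset_perm comp_mem multiset.map_comp)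
qed

lemma lam_id:
  assumes "k \<in> G"
  shows "lam id k = k"
proof -
  obtain K where "k = mset_perm K" using assms by (metis mset_perm_surj)
  then show ?thesis using lam_mset_perm[OF id_mem, of K] by simp
qed

lemma lam_bplus:
  assumes "g \<in> G" "k \<in> G" "l \<in> G"
  shows "lam g (bplus k l) = bplus (lam g k) (lam g l)"
proof -
  obtain K L where "k = mset_perm K" "l = mset_perm L"
    using assms(2,3) by (metis mset_perm_surj)
  then show ?thesis using assms(1) by (simp add: bplus_mset_perm lam_mset_perm)
qed

lemma lam_\<sigma>: "g \<in> G \<Longrightarrow> lam g (\<sigma> x) = \<sigma> (g x)"
  using lam_mset_perm[of g "{#x#}"] by (simp add: mset_perm_single)

lemma lam_lam_inv: "g \<in> G \<Longrightarrow> k \<in> G \<Longrightarrow> lam g (lam (inv g) k) = k"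
proof -
  assume "g \<in> G" "k \<in> G"
  moreover have "g \<circ> inv g = id" using \<open>g \<in> G\<close> by (simp add: fun_eq_iff apply_inv)
  ultimately show ?thesis by (simp add: lam_lam inv_mem lam_id)
qed

lemma comp_eq_bplus_lam: "u \<in> G \<Longrightarrow> v \<in> G \<Longrightarrow> v \<circ> u = bplus u (lam (inv u) v)"
  by (simp add: bplus_eq_lam_comp lam_mem lam_lam_inv)

lemma bplus_neg: "g \<in> G \<Longrightarrow> bplus (lam (inv g) (inv g)) g = id"
proof -
  assume "g \<in> G"
  then have "bplus g (lam (inv g) (inv g)) = inv g \<circ> g"
    by (simp add: bplus_eq_lam_comp lam_mem lam_lam_inv inv_mem)
  also have "\<dots> = id" using \<open>g \<in> G\<close> by (simp add: fun_eq_iff inv_apply)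
  finally show ?thesis by (simp add: bplus_comm)
qed

definition additive_group :: "('a \<Rightarrow> 'a) monoid" where
  "additive_group = \<lparr>carrier = G, mult = bplus, one = id\<rparr>"

lemma additive_group_simps [simp]:
  "carrier additive_group = G" "mult additive_group = bplus" "one additive_group = id"
  by (simp_all add: additive_group_def)

lemma comm_group_additive_group: "comm_group additive_group"
proof (rule comm_groupI)
  show "\<exists>y\<in>carrier additive_group. y \<otimes>\<^bsub>additive_group\<^esub> x = \<one>\<^bsub>additive_group\<^esub>"
    if "x \<in> carrier additive_group" for x
    using that bplus_neg lam_mem by auto
qed (auto simp: bplus_mem id_mem bplus_assoc id_bplus intro: bplus_comm)

lemma lam_hom: "g \<in> G \<Longrightarrow> lam g \<in> hom additive_group additive_group"
  by (simp add: hom_def lam_mem lam_bplus)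

lemma lam_torsion: "g \<in> G \<Longrightarrow> x \<in> torsion additive_group m \<Longrightarrow> lam g x \<in> torsion additive_group m"
  using group_hom.hom_torsion[of additive_group additive_group "lam g"] lam_hom
    comm_group.axioms(2)[OF comm_group_additive_group]
  by (simp add: group_hom_def group_hom_axioms_def)

end

section \<open>Frobenius actions of \<open>G(X)\<close>\<close>

locale frobenius_cycle_set = finite_cycle_set +
  assumes frobenius: "frobenius_action G X"
begin

lemma transitive: "x \<in> X \<Longrightarrow> y \<in> X \<Longrightarrow> \<exists>g\<in>G. g x = y"
  using frobenius by (simp add: frobenius_action_def)

lemma eq_if_two_fixed_points:
  assumes "g \<in> G" "g \<noteq> id" "x \<in> X" "y \<in> X" "g x = x" "g y = y"
  shows "x = y"
proof (rule ccontr)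
  assume "x \<noteq> y"
  have "card {z \<in> X. g z = z} \<le> 1" using frobenius assms(1,2) by (simp add: frobenius_action_def)
  moreover have "card {x, y} \<le> card {z \<in> X. g z = z}"
    using assms(3-6) finite_X by (intro card_mono) auto
  ultimately show False using \<open>x \<noteq> y\<close> by simp
qed

lemma card_G: "x \<in> X \<Longrightarrow> card G = card X * card (stab x)"
  using transitive by (rule card_eq_card_mult_card_stab)

lemma card_stab_eq: "x \<in> X \<Longrightarrow> y \<in> X \<Longrightarrow> card (stab x) = card (stab y)"
  using card_G[of x] card_G[of y] finite_X by (auto simp: card_gt_0_iff)

lemma card_stab_dvd: "x \<in> X \<Longrightarrow> card (stab x) dvd card X - 1"
proof -
  assume "x \<in> X"
  have "card (stab x) dvd card (X - {x})"
  proof (rule card_dvd_card_if_free)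
    show "g z \<in> X - {x}" if "g \<in> stab x" "z \<in> X - {x}" for g z
      using that mem_image inj_mem[of g z x] by (auto simp: stab_def)
    show "g = id" if "g \<in> stab x" "z \<in> X - {x}" "g z = z" for g z
      using that eq_if_two_fixed_points[of g x z] \<open>x \<in> X\<close> by (auto simp: stab_def)
  qed (auto simp: stab_subset id_stab comp_stab inv_stab)
  then show ?thesis using \<open>x \<in> X\<close> finite_X by simp
qed

lemma coprime_card_stab: "x \<in> X \<Longrightarrow> coprime (card X) (card (stab x))"
proof -
  assume "x \<in> X"
  then have "card X > 0" using finite_X by (auto simp: card_gt_0_iff)
  then have "card X = Suc (card X - 1)" by simp
  then have "coprime (card X) (card X - 1)" by (metis coprime_Suc_left_nat)
  then show ?thesis by (rule coprime_divisors[OF dvd_refl card_stab_dvd[OF \<open>x \<in> X\<close>]])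
qed

lemma stab_nontrivial: "x \<in> X \<Longrightarrow> \<exists>g\<in>stab x. g \<noteq> id"
proof -
  assume "x \<in> X"
  obtain g y where "g \<in> G" "g \<noteq> id" "y \<in> X" "g y = y"
    using frobenius by (auto simp: frobenius_action_def)
  then have "{id, g} \<subseteq> stab y" by (simp add: stab_def id_mem)
  then have "card {id, g} \<le> card (stab y)" by (rule card_mono[OF finite_stab])
  then have "2 \<le> card (stab x)"
    using card_stab_eq[OF \<open>x \<in> X\<close> \<open>y \<in> X\<close>] \<open>g \<noteq> id\<close> by simp
  then have "\<not> stab x \<subseteq> {id}" using card_mono[of "{id}" "stab x"] by auto
  then show ?thesis by blast
qed

end

locale frobenius_cycle_set_bezout = frobenius_cycle_set +
  fixes a :: 'a and c d :: nat
  assumes a_mem: "a \<in> X" and bezout: "card (stab a) * c = card X * d + 1"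
begin

sublocale additive: coprime_order_comm_group additive_group "card X" "card (stab a)" c d
proof -
  interpret comm_group additive_group by (rule comm_group_additive_group)
  show "coprime_order_comm_group additive_group (card X) (card (stab a)) c d"
    by unfold_locales (simp_all add: finite_H order_def card_G[OF a_mem] bezout)
qed

abbreviation P :: "('a \<Rightarrow> 'a) set" where
  "P \<equiv> torsion additive_group (card X)"

abbreviation Q :: "('a \<Rightarrow> 'a) set" where
  "Q \<equiv> torsion additive_group (card (stab a))"

lemma n_part_mem: "x \<in> G \<Longrightarrow> additive.n_part x \<in> G"
  using additive.n_part_closed by simp

lemma h_part_mem: "x \<in> G \<Longrightarrow> additive.h_part x \<in> G"
  using additive.h_part_closed by simp

lemma n_part_torsion: "x \<in> G \<Longrightarrow> additive.n_part x \<in> P"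
  using additive.n_part_torsion by simp

lemma h_part_torsion: "x \<in> G \<Longrightarrow> additive.h_part x \<in> Q"
  using additive.h_part_torsion by simp

lemma pow_mem: "x \<in> G \<Longrightarrow> x [^]\<^bsub>additive_group\<^esub> (k::nat) \<in> G"
  using additive.nat_pow_closed by simp

lemma n_part_comp:
  assumes "u \<in> G" "v \<in> G"
  shows "additive.n_part (v \<circ> u) = bplus (additive.n_part u) (lam (inv u) (additive.n_part v))"
proof -
  have "additive.n_part (v \<circ> u) = additive.n_part (bplus u (lam (inv u) v))"
    using assms by (simp add: comp_eq_bplus_lam)
  also have "\<dots> = bplus (additive.n_part u) (additive.n_part (lam (inv u) v))"
    using assms additive.n_part_mult[of u "lam (inv u) v"] by (simp add: lam_mem)
  also have "additive.n_part (lam (inv u) v) = lam (inv u) (additive.n_part v)"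
    using assms by (simp add: additive.hom_n_part lam_hom inv_mem)
  finally show ?thesis .
qed

text \<open>Averaging the cocycle \<open>n_part\<close> over the stabilizer of \<open>a\<close>
  (Schur--Zassenhaus style) gives an element \<open>w\<close> with \<open>w = n_part u + \<lambda>\<^bsub>u\<^sup>-\<^sup>1\<^esub>(w)\<close>,
  and conjugation by \<open>w\<close> moves the stabilizer into the \<open>h\<close>-torsion.\<close>

definition n_part_sum :: "'a \<Rightarrow> 'a" where
  "n_part_sum = finprod additive_group additive.n_part (stab a)"

definition conjugator :: "'a \<Rightarrow> 'a" where
  "conjugator = n_part_sum [^]\<^bsub>additive_group\<^esub> c"

lemma n_part_Pi: "additive.n_part \<in> stab a \<rightarrow> G"
  using n_part_mem stab_subset by auto

lemma n_part_sum_mem: "n_part_sum \<in> G"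
  unfolding n_part_sum_def using additive.finprod_closed n_part_Pi by simp

lemma conjugator_mem: "conjugator \<in> G"
  unfolding conjugator_def using additive.nat_pow_closed n_part_sum_mem by simp

lemma n_part_sum_eq:
  assumes "u \<in> stab a"
  shows "n_part_sum =
    bplus (additive.n_part u [^]\<^bsub>additive_group\<^esub> card (stab a)) (lam (inv u) n_part_sum)"
proof -
  have u: "u \<in> G" "inv u \<in> G" using assms stab_subset inv_mem by auto
  have "finprod additive_group additive.n_part ((\<lambda>v. v \<circ> u) ` stab a)
      = finprod additive_group (\<lambda>v. additive.n_part (v \<circ> u)) (stab a)"
    using n_part_Pi image_comp_right_stab[OF assms]
    by (intro additive.finprod_reindex) (simp_all add: inj_on_comp_right[OF u(1)])
  then have "n_part_sum = finprod additive_group (\<lambda>v. additive.n_part (v \<circ> u)) (stab a)"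
    unfolding n_part_sum_def image_comp_right_stab[OF assms] .
  also have "\<dots> = finprod additive_group
      (\<lambda>v. bplus (additive.n_part u) (lam (inv u) (additive.n_part v))) (stab a)"
    using u by (intro additive.finprod_cong')
      (auto simp: n_part_comp bplus_mem dest: subsetD[OF stab_subset])
  also have "\<dots> = bplus (finprod additive_group (\<lambda>v. additive.n_part u) (stab a))
      (finprod additive_group (\<lambda>v. lam (inv u) (additive.n_part v)) (stab a))"
    using additive.finprod_multf[of "\<lambda>v. additive.n_part u" "stab a"
        "\<lambda>v. lam (inv u) (additive.n_part v)"] u
    by (simp add: n_part_mem lam_mem Pi_iff)
  also have "finprod additive_group (\<lambda>v. additive.n_part u) (stab a)
      = additive.n_part u [^]\<^bsub>additive_group\<^esub> card (stab a)"
    using u by (simp add: additive.finprod_const n_part_mem)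
  also have "finprod additive_group (\<lambda>v. lam (inv u) (additive.n_part v)) (stab a)
      = lam (inv u) n_part_sum"
    unfolding n_part_sum_def
    using hom_finprod_comm_group[OF comm_group_additive_group comm_group_additive_group
        lam_hom[OF u(2)], of additive.n_part "stab a"] n_part_Pi
    by (simp add: comp_def)
  finally show ?thesis .
qed

lemma conjugator_eq:
  assumes "u \<in> stab a"
  shows "conjugator = bplus (additive.n_part u) (lam (inv u) conjugator)"
proof -
  have u: "u \<in> G" "inv u \<in> G" using assms stab_subset inv_mem by auto
  define A where "A = additive.n_part u [^]\<^bsub>additive_group\<^esub> card (stab a)"
  define L where "L = lam (inv u) n_part_sum"
  have "A [^]\<^bsub>additive_group\<^esub> c = additive.n_part (additive.n_part u)"
    using u by (simp add: A_def additive.n_part_def additive.nat_pow_pow n_part_mem mult.assoc)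
  also have "\<dots> = additive.n_part u" using u by (simp add: additive.n_part_idem n_part_torsion)
  finally have A_pow: "A [^]\<^bsub>additive_group\<^esub> c = additive.n_part u" .
  have L_pow: "L [^]\<^bsub>additive_group\<^esub> c = lam (inv u) conjugator"
    using hom_nat_pow[OF lam_hom[OF u(2)], of n_part_sum] n_part_sum_mem additive.is_group
    by (simp add: L_def conjugator_def)
  have "conjugator = bplus A L [^]\<^bsub>additive_group\<^esub> c"
    unfolding conjugator_def A_def L_def by (subst n_part_sum_eq[OF assms]) (rule refl)
  also have "\<dots> = bplus (A [^]\<^bsub>additive_group\<^esub> c) (L [^]\<^bsub>additive_group\<^esub> c)"
    using additive.nat_pow_distrib[of A L c] u by (simp add: A_def L_def n_part_mem lam_mem pow_mem)
  finally show ?thesis using A_pow L_pow by simp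
qed

lemma conjugator_comp_stab:
  assumes "u \<in> stab a"
  shows "conjugator \<circ> u = lam conjugator (additive.h_part u) \<circ> conjugator"
proof -
  have u: "u \<in> G" using assms stab_subset by auto
  have "conjugator \<circ> u = bplus u (lam (inv u) conjugator)"
    using u conjugator_mem by (rule comp_eq_bplus_lam)
  also have "\<dots> = bplus (bplus (additive.h_part u) (additive.n_part u)) (lam (inv u) conjugator)"
    using u additive.h_part_mult_n_part by simp
  also have "\<dots> = bplus (additive.h_part u) (bplus (additive.n_part u) (lam (inv u) conjugator))"
    using u by (simp add: bplus_assoc h_part_mem n_part_mem lam_mem)
  also have "\<dots> = bplus (additive.h_part u) conjugator"
    using conjugator_eq[OF assms] by simp
  also have "\<dots> = lam conjugator (additive.h_part u) \<circ> conjugator"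
    using u by (simp add: bplus_comm bplus_eq_lam_comp conjugator_mem h_part_mem)
  finally show ?thesis .
qed

lemma finite_Q: "finite Q"
  using finite_H by (rule finite_subset[rotated]) (auto simp: torsion_def)

lemma stab_conjugator_eq_torsion: "stab (conjugator a) = Q"
proof -
  let ?w = conjugator
  define C where "C = (\<lambda>u. ?w \<circ> u \<circ> inv ?w) ` stab a"
  have w_inv: "?w \<circ> inv ?w = id" using conjugator_mem by (simp add: fun_eq_iff apply_inv)
  have "?w \<circ> u \<circ> inv ?w \<in> Q" if "u \<in> stab a" for u
  proof -
    have "u \<in> G" using that stab_subset by blast
    have "?w \<circ> u \<circ> inv ?w = lam ?w (additive.h_part u) \<circ> (?w \<circ> inv ?w)"
      by (simp add: conjugator_comp_stab[OF that] comp_assoc)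
    also have "\<dots> = lam ?w (additive.h_part u)" by (simp add: w_inv)
    also have "\<dots> \<in> Q" by (rule lam_torsion[OF conjugator_mem h_part_torsion[OF \<open>u \<in> G\<close>]])
    finally show ?thesis .
  qed
  then have "C \<subseteq> Q" unfolding C_def by blast
  have "C \<subseteq> stab (?w a)" unfolding C_def using conj_stab[OF conjugator_mem] by blast
  have "card C = card (stab a)"
    unfolding C_def by (rule card_image[OF inj_on_subset[OF inj_conj[OF conjugator_mem] subset_UNIV]])
  also have "\<dots> = card (stab (?w a))"
    by (rule card_stab_eq[OF a_mem mem_image[OF conjugator_mem a_mem]])
  finally have "C = stab (?w a)"
    using card_subset_eq[OF finite_stab \<open>C \<subseteq> stab (?w a)\<close>] by simp
  moreover have "C = Q"
  proof (rule card_subset_eq[OF finite_Q \<open>C \<subseteq> Q\<close>])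
    show "card C = card Q"
      using card_mono[OF finite_Q \<open>C \<subseteq> Q\<close>] additive.card_torsion_le \<open>card C = card (stab a)\<close>
      by linarith
  qed
  ultimately show ?thesis by simp
qed

lemma n_part_\<sigma>_mem_stab:
  assumes "b \<in> X" "stab b = Q"
  shows "additive.n_part (\<sigma> b) \<in> stab b"
proof -
  obtain u where u: "u \<in> stab b" "u \<noteq> id" using stab_nontrivial[OF assms(1)] by blast
  have "u \<in> G" "u b = b" using u(1) by (simp_all add: stab_def)
  define k where "k = additive.n_part (\<sigma> b)"
  have "k \<in> G" using \<sigma>_mem by (simp add: k_def n_part_mem)
  have "lam u k = additive.n_part (lam u (\<sigma> b))"
    using additive.hom_n_part[OF lam_hom[OF \<open>u \<in> G\<close>], of "\<sigma> b"] \<sigma>_mem by (simp add: k_def)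
  also have "lam u (\<sigma> b) = \<sigma> b" using lam_\<sigma>[OF \<open>u \<in> G\<close>] \<open>u b = b\<close> by simp
  finally have "lam u k = k" by (simp add: k_def)
  then have "k \<circ> u = bplus k u"
    using bplus_eq_lam_comp[OF \<open>u \<in> G\<close> \<open>k \<in> G\<close>] by (simp add: bplus_comm)
  also have "\<dots> = lam k u \<circ> k" using bplus_eq_lam_comp[OF \<open>k \<in> G\<close> \<open>u \<in> G\<close>] .
  finally have k_u: "k \<circ> u = lam k u \<circ> k" .
  have "lam k u \<in> stab b" using lam_torsion[OF \<open>k \<in> G\<close>] u(1) assms(2) by simp
  define y where "y = inv k b"
  have "y \<in> X" "k y = b" using assms(1) \<open>k \<in> G\<close> by (simp_all add: y_def inv_mem mem_image apply_inv)
  have "k (u y) = lam k u (k y)" using fun_cong[OF k_u, of y] by simp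
  also have "\<dots> = k y" using \<open>lam k u \<in> stab b\<close> \<open>k y = b\<close> by (simp add: stab_def)
  finally have "u y = y" using inj_mem[OF \<open>k \<in> G\<close>] by blast
  then have "y = b"
    using eq_if_two_fixed_points[OF \<open>u \<in> G\<close> u(2) \<open>y \<in> X\<close> assms(1)] \<open>u b = b\<close> by blast
  then show ?thesis using \<open>k y = b\<close> \<open>k \<in> G\<close> by (simp add: k_def stab_def)
qed

lemma \<sigma>_mem_torsion:
  assumes "b \<in> X" "stab b = Q"
  shows "\<sigma> b \<in> Q"
proof -
  have "additive.n_part (\<sigma> b) \<in> P \<inter> Q"
    using n_part_\<sigma>_mem_stab[OF assms] assms(2) n_part_torsion[OF \<sigma>_mem] by simp
  then have "additive.n_part (\<sigma> b) = id" using additive.torsion_inter by simp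
  then have "additive.h_part (\<sigma> b) = \<sigma> b"
    using additive.h_part_mult_n_part[of "\<sigma> b"] \<sigma>_mem h_part_mem bplus_comm id_bplus by simp
  then show ?thesis using h_part_torsion[OF \<sigma>_mem, of b] by simp
qed

lemma common_fixed_point: "\<exists>b\<in>X. G \<subseteq> stab b"
proof -
  define b where "b = conjugator a"
  have "b \<in> X" using mem_image[OF conjugator_mem a_mem] by (simp add: b_def)
  have stab_b: "stab b = Q" using stab_conjugator_eq_torsion by (simp add: b_def)
  have "sigma X op x \<in> stab b" if x: "x \<in> X" for x
  proof -
    obtain g where "g \<in> G" "g b = x" using transitive[OF \<open>b \<in> X\<close> x] by blast
    have "sigma X op x = \<sigma> x" using x by (simp add: \<sigma>_def)
    also have "\<dots> = lam g (\<sigma> b)" using lam_\<sigma>[OF \<open>g \<in> G\<close>] \<open>g b = x\<close> by simp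
    finally have "sigma X op x = lam g (\<sigma> b)" .
    then show ?thesis
      using lam_torsion[OF \<open>g \<in> G\<close> \<sigma>_mem_torsion[OF \<open>b \<in> X\<close> stab_b]] stab_b by simp
  qed
  then have "G \<subseteq> stab b"
    by (intro perm_group_cs_subset) (simp_all add: id_stab comp_stab inv_stab)
  then show ?thesis using \<open>b \<in> X\<close> by blast
qed

end

theorem theorem1:
  fixes X :: "'a set" and op :: "'a \<Rightarrow> 'a \<Rightarrow> 'a"
  assumes "finite X" and "cycle_set X op"
  shows "\<not> frobenius_action (perm_group_cs X op) X"
proof
  assume frobenius: "frobenius_action (perm_group_cs X op) X"
  interpret frobenius_cycle_set X op
    using assms frobenius by unfold_locales
  obtain g a where "g \<in> G" "g \<noteq> id" "a \<in> X"
    using frobenius by (auto simp: frobenius_action_def)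
  have "card (stab a) \<noteq> 0" using finite_stab id_stab by (auto simp: card_eq_0_iff)
  then obtain c d where "card (stab a) * c = card X * d + 1"
    using bezout_nat[of "card (stab a)" "card X"] coprime_card_stab[OF \<open>a \<in> X\<close>]
    by (auto simp: coprime_iff_gcd_eq_1 gcd.commute)
  then interpret frobenius_cycle_set_bezout X op a c d
    using \<open>a \<in> X\<close> by unfold_locales
  obtain b where "b \<in> X" "G \<subseteq> stab b" using common_fixed_point by blast
  then have "X = {b}" using transitive by (fastforce simp: stab_def)
  then have "g = id" using mem_permutes[OF \<open>g \<in> G\<close>] by simp
  with \<open>g \<noteq> id\<close> show False ..
qed

end
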